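(* For $z\in\mathbb R$ let \[p_1(z)=-7+30z-24z^2-14z^3+12z^4-6z^5+2z^6,\] \[p_2(z)=81-324z+1188z^2-1404z^3-216z^4+1404z^5-972z^6+432z^7-108z^8,\] \[\mathcal Q(z)=\frac13(z^2-z+1)-\frac{\sqrt[3]{2}\,(3-(z^2-z+1)^2)}{3\sqrt[3]{p_1(z)+\sqrt{p_2(z)}}}+\frac{\sqrt[3]{p_1(z)+\sqrt{p_2(z)}}}{3\sqrt[3]{2}}.\] If $v\in(0.35,1/2)$, then $\mathcal Q(v)<4v/5$. If $v\in[0.22,0.35]$, then $\mathcal Q(v)<9v/10$. *)

theory Defs
  imports Complex_Main
begin

definition p1 :: "real \<Rightarrow> real" where
  "p1 z = -7 + 30*z - 24*z^2 - 14*z^3 + 12*z^4 - 6*z^5 + 2*z^6"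

definition p2 :: "real \<Rightarrow> real" where
  "p2 z = 81 - 324*z + 1188*z^2 - 1404*z^3 - 216*z^4 + 1404*z^5 - 972*z^6 + 432*z^7 - 108*z^8"

definition Q :: "real \<Rightarrow> real" where
  "Q z = (1/3) * (z^2 - z + 1)
        - (root 3 2 * (3 - (z^2 - z + 1)^2)) / (3 * root 3 (p1 z + sqrt (p2 z)))
        + root 3 (p1 z + sqrt (p2 z)) / (3 * root 3 2)"

end

theory Submission
  imports Defs
begin

text \<open>With \<open>a = v\<^sup>2 - v + 1\<close> and \<open>b = 3 - a\<^sup>2\<close> one has \<open>p2 v = (p1 v)\<^sup>2 + 4 b\<^sup>3\<close>, so
  \<open>3 Q v - a\<close> is Cardano's formula for the real root of the depressed cubic
  \<open>y\<^sup>3 + 3 b y = p1 v\<close>. For \<open>0 < v < 1\<close> we have \<open>b > 0\<close>, so the cubic is strictly increasing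
  and \<open>Q v < k v\<close> holds iff the cubic at \<open>3 k v - a\<close> exceeds \<open>p1 v\<close>. For the two values of \<open>k\<close>
  that difference is \<open>v\<close> times a cubic polynomial which is positive on the respective interval.\<close>

definition depressed_cubic :: "real \<Rightarrow> real \<Rightarrow> real" where
  "depressed_cubic b y = y^3 + 3*b*y"

lemma strict_mono_depressed_cubic:
  assumes "0 \<le> b"
  shows "strict_mono (depressed_cubic b)"
proof (rule strict_monoI)
  fix y Y :: real
  assume "y < Y"
  \<comment> \<open>cubing is strictly monotone since its inverse \<open>root 3\<close> is\<close>
  then have "y^3 < Y^3"
    using real_root_less_iff[of 3 "y^3" "Y^3"] by (simp add: odd_real_root_power_cancel)
  moreover have "3*b*y \<le> 3*b*Y"
    using \<open>y < Y\<close> assms by (simp add: mult_left_mono)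
  ultimately show "depressed_cubic b y < depressed_cubic b Y"
    unfolding depressed_cubic_def by linarith
qed

lemma depressed_cubic_cardano_root:
  fixes b p :: real
  defines "u \<equiv> root 3 ((p + sqrt (p^2 + 4*b^3)) / 2)"
  assumes "0 < b"
  shows "depressed_cubic b (u - b/u) = p"
proof -
  define s where "s = sqrt (p^2 + 4*b^3)"
  define X where "X = (p + s) / 2"
  have s_sq: "s^2 = p^2 + 4*b^3"
    unfolding s_def using \<open>0 < b\<close> by simp
  have "(-p)^2 < p^2 + 4*b^3"
    using \<open>0 < b\<close> by simp
  then have "0 < X"
    unfolding X_def s_def using real_less_rsqrt by fastforce
  have u_cube: "u^3 = X"
    unfolding u_def X_def s_def by (simp add: odd_real_root_pow)
  then have "u \<noteq> 0"
    using \<open>0 < X\<close> by auto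
  \<comment> \<open>the two Cardano cube roots multiply to \<open>b\<close>, hence the cube of the second is \<open>(s - p)/2\<close>\<close>
  have "X * ((s - p) / 2) = b^3"
    unfolding X_def using s_sq by (simp add: algebra_simps power2_eq_square)
  then have w_cube: "(b/u)^3 = (s - p) / 2"
    using u_cube \<open>0 < X\<close> by (simp add: power_divide field_simps)
  have "depressed_cubic b (u - w) = u^3 - w^3 - 3*(u*w - b)*(u - w)" for w
    unfolding depressed_cubic_def by (simp add: algebra_simps power3_eq_cube)
  also have "u^3 - (b/u)^3 - 3*(u * (b/u) - b)*(u - b/u) = p"
    using u_cube w_cube \<open>u \<noteq> 0\<close> unfolding X_def by simp
  finally show ?thesis .
qed

lemma Q_eq_cardano:
  fixes v :: real
  defines "a \<equiv> v^2 - v + 1"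
    and "u \<equiv> root 3 ((p1 v + sqrt (p2 v)) / 2)"
  shows "Q v = (a + (u - (3 - a^2)/u)) / 3"
proof (cases "p1 v + sqrt (p2 v) = 0")
  case False
  then show ?thesis
    unfolding Q_def a_def u_def real_root_divide by (simp add: field_simps)
qed (simp add: Q_def a_def u_def)

lemma p2_eq_discriminant:
  fixes v :: real
  defines "a \<equiv> v^2 - v + 1"
  shows "p2 v = (p1 v)^2 + 4*(3 - a^2)^3"
  unfolding p1_def p2_def a_def by algebra

lemma Q_less_iff:
  fixes v k :: real
  defines "a \<equiv> v^2 - v + 1"
  assumes "0 < v" "v < 1"
  shows "Q v < k*v \<longleftrightarrow> p1 v < depressed_cubic (3 - a^2) (3*k*v - a)"
proof -
  define b where "b = 3 - a^2"
  define u where "u = root 3 ((p1 v + sqrt (p2 v)) / 2)"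
  have "0 \<le> v^2" "v^2 \<le> v"
    using assms(2,3) by (simp_all add: power2_eq_square mult_le_cancel_left1)
  then have "0 < a" "a \<le> 1"
    unfolding a_def using assms(3) by linarith+
  then have "0 < b"
    unfolding b_def using power_le_one[of a 2] by simp
  have "u = root 3 ((p1 v + sqrt ((p1 v)^2 + 4*b^3)) / 2)"
    unfolding u_def b_def a_def p2_eq_discriminant ..
  then have root: "depressed_cubic b (u - b/u) = p1 v"
    using depressed_cubic_cardano_root[OF \<open>0 < b\<close>] by simp
  have "Q v < k*v \<longleftrightarrow> u - b/u < 3*k*v - a"
    unfolding Q_eq_cardano u_def a_def b_def by (simp add: field_simps)
  also have "\<dots> \<longleftrightarrow> p1 v < depressed_cubic b (3*k*v - a)"
    unfolding root[symmetric]
    using strict_mono_depressed_cubic \<open>0 < b\<close> by (simp add: strict_mono_less)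
  finally show ?thesis
    unfolding b_def .
qed

lemma Q_less_4_5:
  fixes v :: real
  assumes "0.35 < v" "v < 1/2"
  shows "Q v < 4/5 * v"
proof -
  have gap: "depressed_cubic (3 - (v^2 - v + 1)^2) (3 * (4/5) * v - (v^2 - v + 1)) - p1 v
        = v * (-675 + 1215*v + 3888*v^2 - 2160*v^3) / 125"
    unfolding depressed_cubic_def p1_def by algebra
  have "v^3 \<le> 1/2 * v^2" "7/20 * v \<le> v^2"
    using assms by (simp_all add: power3_eq_cube power2_eq_square)
  then have "0 < -675 + 1215*v + 3888*v^2 - 2160*v^3"
    using assms(1) by simp
  then have "0 < v * (-675 + 1215*v + 3888*v^2 - 2160*v^3) / 125"
    using assms(1) by simp
  then have "p1 v < depressed_cubic (3 - (v^2 - v + 1)^2) (3 * (4/5) * v - (v^2 - v + 1))"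
    using gap by linarith
  then show ?thesis
    using Q_less_iff[of v "4/5"] assms by simp
qed

lemma Q_less_9_10:
  fixes v :: real
  assumes "0.22 \<le> v" "v \<le> 0.35"
  shows "Q v < 9/10 * v"
proof -
  have gap: "depressed_cubic (3 - (v^2 - v + 1)^2) (3 * (9/10) * v - (v^2 - v + 1)) - p1 v
        = v * (-2700 + 5130*v + 41553*v^2 - 21870*v^3) / 1000"
    unfolding depressed_cubic_def p1_def by algebra
  have "v^3 \<le> 7/20 * v^2" "11/50 * v \<le> v^2"
    using assms by (simp_all add: power3_eq_cube power2_eq_square)
  then have "0 < -2700 + 5130*v + 41553*v^2 - 21870*v^3"
    using assms(1) by simp
  then have "0 < v * (-2700 + 5130*v + 41553*v^2 - 21870*v^3) / 1000"
    using assms(1) by simp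
  then have "p1 v < depressed_cubic (3 - (v^2 - v + 1)^2) (3 * (9/10) * v - (v^2 - v + 1))"
    using gap by linarith
  then show ?thesis
    using Q_less_iff[of v "9/10"] assms by simp
qed

theorem lemma4p3:
  shows "(\<forall>v::real. 0.35 < v \<and> v < 1/2 \<longrightarrow> Q v < 4*v/5)
       \<and> (\<forall>v::real. 0.22 \<le> v \<and> v \<le> 0.35 \<longrightarrow> Q v < 9*v/10)"
  using Q_less_4_5 Q_less_9_10 by auto

end
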